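(* Let $\mathscr{R}_1, \mathscr{R}_2$ be von Neumann algebras acting on a Hilbert space $\mathscr{H}$, and let $A$ be an operator in $\mathscr{R}_1\cap\mathscr{R}_2$. Then $\mathscr{R}_1A\cap\mathscr{R}_2 = \mathscr{R}_1A\cap\mathscr{R}_2A = (\mathscr{R}_1\cap\mathscr{R}_2)A$.
   Context: For a set $\mathscr{M}$ of operators and an operator $A$, $\mathscr{M}A = \{MA : M\in\mathscr{M}\}$. *)

theory Defs
  imports "HOL-Analysis.Analysis"
begin

text \<open>Complex vector spaces, complex inner product spaces and complex Hilbert spaces
  (HOL-Analysis only provides real inner product spaces).\<close>

class complex_vector = real_vector +
  fixes scaleC :: "complex \<Rightarrow> 'a \<Rightarrow> 'a" (infixr \<open>*\<^sub>C\<close> 75)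
  assumes scaleC_add_right: "a *\<^sub>C (x + y) = a *\<^sub>C x + a *\<^sub>C y"
    and scaleC_add_left: "(a + b) *\<^sub>C x = a *\<^sub>C x + b *\<^sub>C x"
    and scaleC_scaleC: "a *\<^sub>C (b *\<^sub>C x) = (a * b) *\<^sub>C x"
    and scaleC_one: "1 *\<^sub>C x = x"
    and scaleR_scaleC: "scaleR r x = complex_of_real r *\<^sub>C x"

class complex_inner = complex_vector + real_normed_vector +
  fixes cinner :: "'a \<Rightarrow> 'a \<Rightarrow> complex"
  assumes cinner_commute: "cinner x y = cnj (cinner y x)"
    and cinner_add_left: "cinner (x + y) z = cinner x z + cinner y z"
    and cinner_scaleC_left: "cinner (r *\<^sub>C x) y = cnj r * cinner x y"
    and cinner_nonneg: "0 \<le> Re (cinner x x)"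
    and cinner_eq_zero_iff: "cinner x x = 0 \<longleftrightarrow> x = 0"
    and norm_eq_sqrt_cinner: "norm x = sqrt (Re (cinner x x))"

class chilbert_space = complex_inner + complete_space

definition bounded_clinear :: "('a::complex_inner \<Rightarrow> 'b::complex_inner) \<Rightarrow> bool" where
  "bounded_clinear f \<longleftrightarrow>
     (\<forall>x y. f (x + y) = f x + f y) \<and> (\<forall>c x. f (c *\<^sub>C x) = c *\<^sub>C f x) \<and>
     (\<exists>K. \<forall>x. norm (f x) \<le> norm x * K)"

definition is_adjoint :: "('a::complex_inner \<Rightarrow> 'a) \<Rightarrow> ('a \<Rightarrow> 'a) \<Rightarrow> bool" where
  "is_adjoint T S \<longleftrightarrow> (\<forall>x y. cinner (T x) y = cinner x (S y))"

text \<open>Closedness in the weak-operator topology (via its basic neighbourhoods).\<close>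

definition wot_closed :: "('a::complex_inner \<Rightarrow> 'a) set \<Rightarrow> bool" where
  "wot_closed M \<longleftrightarrow>
     (\<forall>T. bounded_clinear T \<and>
          (\<forall>e>0. \<forall>F::('a \<times> 'a) set. finite F \<longrightarrow>
              (\<exists>S\<in>M. \<forall>(x, y)\<in>F. cmod (cinner (T x - S x) y) < e))
        \<longrightarrow> T \<in> M)"

definition von_neumann_algebra :: "('a::chilbert_space \<Rightarrow> 'a) set \<Rightarrow> bool" where
  "von_neumann_algebra R \<longleftrightarrow>
     (\<forall>T\<in>R. bounded_clinear T) \<and> id \<in> R \<and>
     (\<forall>S\<in>R. \<forall>T\<in>R. (\<lambda>x. S x + T x) \<in> R \<and> S \<circ> T \<in> R) \<and>
     (\<forall>c. \<forall>T\<in>R. (\<lambda>x. c *\<^sub>C T x) \<in> R) \<and>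
     (\<forall>T\<in>R. \<exists>S\<in>R. is_adjoint T S) \<and>
     wot_closed R"

definition op_rmult :: "('a \<Rightarrow> 'a) set \<Rightarrow> ('a \<Rightarrow> 'a) \<Rightarrow> ('a \<Rightarrow> 'a) set" where
  "op_rmult M A = (\<lambda>T. T \<circ> A) ` M"

end

theory Submission
  imports Defs
begin

text \<open>Only the inclusion \<open>R1 A \<inter> R2 \<subseteq> (R1 \<inter> R2) A\<close> needs an idea. Let \<open>T \<in> R1\<close> with
  \<open>T A \<in> R2\<close>, and put \<open>D = I - r A A\<^sup>*\<close> with \<open>r > 0\<close> so small that \<open>D\<close> is a self-adjoint
  contraction. Since \<open>\<parallel>D x\<parallel>\<^sup>2 \<le> \<parallel>x\<parallel>\<^sup>2 - r \<parallel>A\<^sup>* x\<parallel>\<^sup>2\<close>, the norms \<open>\<parallel>D\<^bsup>k\<^esup> x\<parallel>\<close> decrease, which makes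
  \<open>D\<^bsup>2n\<^esup> x\<close> a Cauchy sequence with a limit \<open>L x\<close>, and \<open>\<Sum>\<^sub>k r \<parallel>A\<^sup>* D\<^bsup>k\<^esup> x\<parallel>\<^sup>2 \<le> \<parallel>x\<parallel>\<^sup>2\<close>, which
  forces \<open>\<parallel>D\<^bsup>n\<^esup> A y\<parallel>\<^sup>2 = \<langle>y, A\<^sup>* D\<^bsup>2n\<^esup> A y\<rangle> \<rightarrow> 0\<close>, i.e. \<open>L A = 0\<close>. As
  \<open>I - D\<^bsup>2n\<^esup> = r A A\<^sup>* \<Sum>\<^sub>j\<^sub><\<^sub>2\<^sub>n D\<^bsup>j\<^esup>\<close>, the operators \<open>T (I - D\<^bsup>2n\<^esup>)\<close> lie in \<open>R1\<close> (as \<open>T \<in> R1\<close>)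
  and in \<open>R2\<close> (as they factor through \<open>T A \<in> R2\<close>). Their strong limit \<open>S = T (I - L)\<close>
  therefore lies in \<open>R1 \<inter> R2\<close> by weak-operator closedness, and \<open>S A = T A\<close>.\<close>

lemma cinner_zero_left [simp]: "cinner 0 (y::'a::complex_inner) = 0"
  using cinner_add_left[of 0 0 y] by simp

lemma cinner_zero_right [simp]: "cinner (x::'a::complex_inner) 0 = 0"
  by (metis cinner_commute cinner_zero_left complex_cnj_zero)

lemma cinner_diff_left: "cinner (x - y) z = cinner x z - cinner (y::'a::complex_inner) z"
  by (metis add_diff_cancel cinner_add_left diff_add_cancel)

lemma cinner_diff_right: "cinner x (y - z) = cinner x y - cinner (x::'a::complex_inner) z"
  by (metis cinner_commute cinner_diff_left complex_cnj_diff)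

lemma cinner_scaleC_right: "cinner x (c *\<^sub>C y) = c * cinner (x::'a::complex_inner) y"
  by (metis cinner_commute cinner_scaleC_left complex_cnj_cnj complex_cnj_mult)

lemma cinner_scaleR_left: "cinner (r *\<^sub>R x) y = complex_of_real r * cinner (x::'a::complex_inner) y"
  by (simp add: scaleR_scaleC cinner_scaleC_left)

lemma cinner_scaleR_right: "cinner x (r *\<^sub>R y) = complex_of_real r * cinner (x::'a::complex_inner) y"
  by (simp add: scaleR_scaleC cinner_scaleC_right)

lemma cinner_self: "cinner x x = complex_of_real ((norm (x::'a::complex_inner))\<^sup>2)"
proof (rule complex_eqI)
  have "Im (cinner x x) = Im (cnj (cinner x x))"
    using cinner_commute[of x x] by simp
  then show "Im (cinner x x) = Im (complex_of_real ((norm x)\<^sup>2))"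
    by simp
  show "Re (cinner x x) = Re (complex_of_real ((norm x)\<^sup>2))"
    using norm_eq_sqrt_cinner[of x] cinner_nonneg[of x] by simp
qed

lemma Re_cinner_self: "Re (cinner x x) = (norm (x::'a::complex_inner))\<^sup>2"
  by (simp add: cinner_self del: of_real_power)

lemma Re_cinner_commute: "Re (cinner y x) = Re (cinner x (y::'a::complex_inner))"
  by (metis cinner_commute cnj.simps(1))

lemma norm_diff_square:
  "(norm (x - y))\<^sup>2 = (norm x)\<^sup>2 - 2 * Re (cinner x y) + (norm (y::'a::complex_inner))\<^sup>2"
proof -
  have "cinner (x - y) (x - y) = cinner x x - cinner x y - cinner y x + cinner y y"
    by (simp add: cinner_diff_left cinner_diff_right)
  then show ?thesis
    by (simp add: Re_cinner_self [symmetric] Re_cinner_commute[of y x])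
qed

lemma norm_scaleC: "norm (c *\<^sub>C x) = cmod c * norm (x::'a::complex_inner)"
proof -
  have "cinner (c *\<^sub>C x) (c *\<^sub>C x) = complex_of_real ((cmod c)\<^sup>2) * cinner x x"
    by (simp add: cinner_scaleC_left cinner_scaleC_right complex_norm_square mult.commute
        del: of_real_power)
  then have "(norm (c *\<^sub>C x))\<^sup>2 = (cmod c * norm x)\<^sup>2"
    by (simp add: Re_cinner_self [symmetric] power_mult_distrib del: of_real_power)
  then show ?thesis
    by (simp add: power2_eq_iff_nonneg)
qed

lemma cauchy_schwarz_cinner: "cmod (cinner x y) \<le> norm x * norm (y::'a::complex_inner)"
proof (cases "y = 0")
  case True
  then show ?thesis by simp
next
  case False
  define n where "n = (norm y)\<^sup>2"
  have n: "n > 0"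
    using False by (simp add: n_def)
  define a where "a = cinner y x"
  define t where "t = a / complex_of_real n"
  \<comment> \<open>\<open>t y\<close> is the orthogonal projection of \<open>x\<close> onto \<open>y\<close>\<close>
  have "cinner (x - t *\<^sub>C y) (x - t *\<^sub>C y) =
      cinner x x - t * cnj a - cnj t * a + cnj t * t * cinner y y"
    by (simp add: cinner_diff_left cinner_diff_right cinner_scaleC_left cinner_scaleC_right
        a_def cinner_commute[of x y] algebra_simps)
  also have "\<dots> = complex_of_real ((norm x)\<^sup>2 - (cmod a)\<^sup>2 / n)"
    using n unfolding t_def
    by (simp add: cinner_self n_def[symmetric] complex_norm_square field_simps del: of_real_power)
  finally have "0 \<le> (norm x)\<^sup>2 - (cmod a)\<^sup>2 / n"
    by (metis Re_cinner_self Re_complex_of_real zero_le_power2)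
  then have "(cmod a)\<^sup>2 \<le> (norm x * norm y)\<^sup>2"
    using n by (simp add: n_def field_simps power_mult_distrib)
  then have "cmod a \<le> norm x * norm y"
    by (rule power2_le_imp_le) simp
  then show ?thesis
    unfolding a_def by (metis cinner_commute complex_mod_cnj)
qed

lemma bounded_clinear_imp_bounded_linear:
  assumes "bounded_clinear (T::'a::complex_inner \<Rightarrow> 'b::complex_inner)"
  shows "bounded_linear T"
proof -
  obtain K where "\<forall>x. norm (T x) \<le> norm x * K"
    and "\<forall>x y. T (x + y) = T x + T y" and "\<forall>c x. T (c *\<^sub>C x) = c *\<^sub>C T x"
    using assms unfolding bounded_clinear_def by blast
  then show ?thesis
    by (intro bounded_linear_intro[where K=K]) (simp_all add: scaleR_scaleC)
qed

lemma bounded_linear_scaleC: "bounded_linear (\<lambda>u::'a::complex_inner. c *\<^sub>C u)"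
  by (rule bounded_linear_intro[where K="cmod c"])
     (auto simp: scaleC_add_right scaleR_scaleC scaleC_scaleC norm_scaleC mult.commute)

lemma bounded_clinear_pointwise_limit:
  fixes Fs :: "nat \<Rightarrow> 'a::complex_inner \<Rightarrow> 'a"
  assumes bounded: "\<And>n. bounded_clinear (Fs n)"
    and uniform: "\<And>n x. norm (Fs n x) \<le> norm x * K"
    and lim: "\<And>x. (\<lambda>n. Fs n x) \<longlonglongrightarrow> G x"
  shows "bounded_clinear G"
  unfolding bounded_clinear_def
proof (intro conjI allI exI)
  fix x y
  have "(\<lambda>n. Fs n (x + y)) \<longlonglongrightarrow> G x + G y"
    using tendsto_add[OF lim[of x] lim[of y]] bounded unfolding bounded_clinear_def by simp
  then show "G (x + y) = G x + G y"
    using lim[of "x + y"] LIMSEQ_unique by blast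
next
  fix c x
  have "(\<lambda>n. Fs n (c *\<^sub>C x)) \<longlonglongrightarrow> c *\<^sub>C G x"
    using bounded_linear.tendsto[OF bounded_linear_scaleC lim[of x]] bounded
    unfolding bounded_clinear_def by simp
  then show "G (c *\<^sub>C x) = c *\<^sub>C G x"
    using lim[of "c *\<^sub>C x"] LIMSEQ_unique by blast
next
  fix x
  show "norm (G x) \<le> norm x * K"
    using tendsto_norm[OF lim[of x]] uniform by (meson LIMSEQ_le_const2)
qed

lemma wot_closed_pointwise_limit:
  fixes Fs :: "nat \<Rightarrow> 'a::complex_inner \<Rightarrow> 'a"
  assumes "wot_closed R" and "\<And>n. Fs n \<in> R"
    and lim: "\<And>x. (\<lambda>n. Fs n x) \<longlonglongrightarrow> G x" and "bounded_clinear G"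
  shows "G \<in> R"
proof -
  have "\<exists>S\<in>R. \<forall>(x, y)\<in>F. cmod (cinner (G x - S x) y) < e"
    if "e > 0" and "finite F" for e and F :: "('a \<times> 'a) set"
  proof -
    have "(\<lambda>n. cmod (cinner (G x - Fs n x) y)) \<longlonglongrightarrow> 0" for x y
    proof (rule tendsto_sandwich[OF _ _ tendsto_const])
      have "(\<lambda>n. G x - Fs n x) \<longlonglongrightarrow> 0"
        using tendsto_diff[OF tendsto_const lim[of x], of "G x"] by simp
      then show "(\<lambda>n. norm (G x - Fs n x) * norm y) \<longlonglongrightarrow> 0"
        using tendsto_mult[OF tendsto_norm tendsto_const, of _ 0 sequentially "norm y"] by simp
    qed (simp_all add: cauchy_schwarz_cinner)
    then have "\<forall>\<^sub>F n in sequentially. cmod (cinner (G x - Fs n x) y) < e" for x y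
      using \<open>e > 0\<close> by (rule order_tendstoD(2))
    then have "\<forall>\<^sub>F n in sequentially. \<forall>(x, y)\<in>F. cmod (cinner (G x - Fs n x) y) < e"
      using eventually_ball_finite[OF \<open>finite F\<close>,
          of "\<lambda>n p. cmod (cinner (G (fst p) - Fs n (fst p)) (snd p)) < e"]
      by (simp add: case_prod_beta)
    then obtain n where "\<forall>(x, y)\<in>F. cmod (cinner (G x - Fs n x) y) < e"
      unfolding eventually_sequentially by blast
    then show ?thesis
      using assms(2) by blast
  qed
  then show ?thesis
    using assms(1,4) unfolding wot_closed_def by blast
qed

lemma adjoint_unique:
  assumes "is_adjoint A B1" and "is_adjoint A (B2::'a::complex_inner \<Rightarrow> 'a)"
  shows "B1 = B2"
proof
  fix y
  have "cinner x (B1 y - B2 y) = 0" for x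
    using assms unfolding is_adjoint_def by (simp add: cinner_diff_right)
  then show "B1 y = B2 y"
    using cinner_eq_zero_iff[of "B1 y - B2 y"] by simp
qed

lemma von_neumann_algebra_bounded_clinear:
  "von_neumann_algebra R \<Longrightarrow> T \<in> R \<Longrightarrow> bounded_clinear T"
  unfolding von_neumann_algebra_def by blast

lemma von_neumann_algebra_id: "von_neumann_algebra R \<Longrightarrow> (\<lambda>x. x) \<in> R"
  unfolding von_neumann_algebra_def id_def by blast

lemma von_neumann_algebra_add:
  "von_neumann_algebra R \<Longrightarrow> S \<in> R \<Longrightarrow> T \<in> R \<Longrightarrow> (\<lambda>x. S x + T x) \<in> R"
  unfolding von_neumann_algebra_def by blast

lemma von_neumann_algebra_comp:
  "von_neumann_algebra R \<Longrightarrow> S \<in> R \<Longrightarrow> T \<in> R \<Longrightarrow> S \<circ> T \<in> R"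
  unfolding von_neumann_algebra_def by blast

lemma von_neumann_algebra_scaleR:
  assumes "von_neumann_algebra R" and "T \<in> R"
  shows "(\<lambda>x. r *\<^sub>R T x) \<in> R"
proof -
  have "(\<lambda>x. complex_of_real r *\<^sub>C T x) \<in> R"
    using assms unfolding von_neumann_algebra_def by blast
  then show ?thesis
    by (simp add: scaleR_scaleC)
qed

lemma von_neumann_algebra_diff:
  "von_neumann_algebra R \<Longrightarrow> S \<in> R \<Longrightarrow> T \<in> R \<Longrightarrow> (\<lambda>x. S x - T x) \<in> R"
  using von_neumann_algebra_add[of R S "\<lambda>x. (-1) *\<^sub>R T x"] von_neumann_algebra_scaleR[of R T "-1"]
  by simp

lemma von_neumann_algebra_funpow: "von_neumann_algebra R \<Longrightarrow> T \<in> R \<Longrightarrow> T ^^ n \<in> R"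
  by (induction n) (auto simp: von_neumann_algebra_comp von_neumann_algebra_id[unfolded id_def[symmetric]])

lemma von_neumann_algebra_sum:
  assumes "von_neumann_algebra R" and "\<And>j. F j \<in> R"
  shows "(\<lambda>x. \<Sum>j<(m::nat). F j x) \<in> R"
proof (induction m)
  case 0
  show ?case
    using von_neumann_algebra_scaleR[OF assms(1) von_neumann_algebra_id[OF assms(1)], of 0] by simp
qed (simp add: von_neumann_algebra_add assms)

lemma von_neumann_algebra_adjoint:
  assumes "von_neumann_algebra R" and "T \<in> R" and "is_adjoint T S"
  shows "S \<in> R"
proof -
  obtain S' where "S' \<in> R" and "is_adjoint T S'"
    using assms(1,2) unfolding von_neumann_algebra_def by blast
  then show ?thesis
    using adjoint_unique[OF assms(3)] by simp
qed

lemma von_neumann_algebra_pointwise_limit: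
  fixes Fs :: "nat \<Rightarrow> 'a::chilbert_space \<Rightarrow> 'a"
  assumes "von_neumann_algebra R" and "\<And>n. Fs n \<in> R"
    and "\<And>n x. norm (Fs n x) \<le> norm x * K" and "\<And>x. (\<lambda>n. Fs n x) \<longlonglongrightarrow> G x"
  shows "G \<in> R"
proof (rule wot_closed_pointwise_limit[OF _ assms(2,4)])
  show "wot_closed R"
    using assms(1) unfolding von_neumann_algebra_def by blast
  show "bounded_clinear G"
    using von_neumann_algebra_bounded_clinear[OF assms(1,2)] assms(3,4)
    by (rule bounded_clinear_pointwise_limit)
qed

lemma bounded_clinear_damping_factor:
  assumes "bounded_clinear (A::'a::complex_inner \<Rightarrow> 'a)"
  obtains r where "r > 0" and "\<And>x. r * (norm (A x))\<^sup>2 \<le> (norm x)\<^sup>2"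
proof -
  obtain K where K: "K > 0" "\<And>x. norm (A x) \<le> norm x * K"
    using bounded_linear.pos_bounded[OF bounded_clinear_imp_bounded_linear[OF assms]] by blast
  have "(norm (A x))\<^sup>2 \<le> (norm x)\<^sup>2 * K\<^sup>2" for x
    using power_mono[OF K(2)[of x] norm_ge_zero] by (simp add: power_mult_distrib)
  then show thesis
    using K by (intro that[of "1 / K\<^sup>2"]) (simp_all add: field_simps)
qed

locale damped_adjoint_pair =
  fixes A B :: "'a::chilbert_space \<Rightarrow> 'a" and r :: real
  assumes A_bounded: "bounded_clinear A" and B_bounded: "bounded_clinear B"
    and adjoint: "is_adjoint A B"
    and r_pos: "r > 0" and r_small: "\<And>x. r * (norm (A x))\<^sup>2 \<le> (norm x)\<^sup>2"
begin

definition damp :: "'a \<Rightarrow> 'a" where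
  "damp x = x - r *\<^sub>R A (B x)"

lemma A_linear: "bounded_linear A"
  using bounded_clinear_imp_bounded_linear[OF A_bounded] .

lemma B_linear: "bounded_linear B"
  using bounded_clinear_imp_bounded_linear[OF B_bounded] .

lemma cinner_A: "cinner (A x) y = cinner x (B y)"
  using adjoint unfolding is_adjoint_def by blast

lemma cinner_AB_right: "cinner x (A (B y)) = cinner (B x) (B y)"
  by (metis cinner_A cinner_commute)

lemma damp_self_adjoint: "cinner (damp x) y = cinner x (damp y)"
  unfolding damp_def
  by (simp add: cinner_diff_left cinner_diff_right cinner_scaleR_left cinner_scaleR_right
      cinner_A cinner_AB_right)

lemma norm_damp_square_le: "(norm (damp z))\<^sup>2 \<le> (norm z)\<^sup>2 - r * (norm (B z))\<^sup>2"
proof -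
  have "Re (cinner z (r *\<^sub>R A (B z))) = r * (norm (B z))\<^sup>2"
    by (simp add: cinner_scaleR_right cinner_AB_right Re_cinner_self)
  moreover have "(norm (r *\<^sub>R A (B z)))\<^sup>2 = r * (r * (norm (A (B z)))\<^sup>2)"
    using r_pos by (simp add: power_mult_distrib power2_eq_square)
  moreover have "r * (r * (norm (A (B z)))\<^sup>2) \<le> r * (norm (B z))\<^sup>2"
    using r_small[of "B z"] r_pos by simp
  ultimately show ?thesis
    using norm_diff_square[of z "r *\<^sub>R A (B z)"] unfolding damp_def by linarith
qed

lemma norm_damp_le: "norm (damp z) \<le> norm z"
proof (rule power2_le_imp_le)
  show "(norm (damp z))\<^sup>2 \<le> (norm z)\<^sup>2"
    using norm_damp_square_le[of z] mult_nonneg_nonneg[OF less_imp_le[OF r_pos] zero_le_power2[of "norm (B z)"]]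
    by linarith
qed simp

lemma norm_damp_power_le: "norm ((damp ^^ n) x) \<le> norm x"
  by (induction n) (auto intro: order_trans[OF norm_damp_le])

lemma damp_power_self_adjoint: "cinner ((damp ^^ n) x) y = cinner x ((damp ^^ n) y)"
proof (induction n arbitrary: x y)
  case (Suc n)
  have "cinner ((damp ^^ Suc n) x) y = cinner ((damp ^^ n) x) (damp y)"
    by (simp add: damp_self_adjoint)
  also have "\<dots> = cinner x ((damp ^^ Suc n) y)"
    by (simp add: Suc.IH funpow_Suc_right del: funpow.simps)
  finally show ?case .
qed simp

lemma cinner_damp_powers:
  "cinner ((damp ^^ a) x) ((damp ^^ b) y) = cinner x ((damp ^^ (a + b)) y)"
  by (simp add: damp_power_self_adjoint funpow_add)

lemma sum_norm_B_damp_power_le: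
  "(\<Sum>k<N. r * (norm (B ((damp ^^ k) x)))\<^sup>2) \<le> (norm x)\<^sup>2 - (norm ((damp ^^ N) x))\<^sup>2"
proof (induction N)
  case (Suc N)
  then show ?case
    using norm_damp_square_le[of "(damp ^^ N) x"] by simp
qed simp

lemma B_damp_power_tendsto_zero: "(\<lambda>k. norm (B ((damp ^^ k) x))) \<longlonglongrightarrow> 0"
proof -
  have "(\<Sum>k<n. r * (norm (B ((damp ^^ k) x)))\<^sup>2) \<le> (norm x)\<^sup>2" for n
    using sum_norm_B_damp_power_le[where N=n and x=x] zero_le_power2[of "norm ((damp ^^ n) x)"] by linarith
  then have "summable (\<lambda>k. r * (norm (B ((damp ^^ k) x)))\<^sup>2)"
    using r_pos by (intro summableI_nonneg_bounded[where x="(norm x)\<^sup>2"]) simp_all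
  then have "(\<lambda>k. (1 / r) * (r * (norm (B ((damp ^^ k) x)))\<^sup>2)) \<longlonglongrightarrow> (1 / r) * 0"
    by (rule tendsto_mult[OF tendsto_const summable_LIMSEQ_zero])
  then have "(\<lambda>k. sqrt ((norm (B ((damp ^^ k) x)))\<^sup>2)) \<longlonglongrightarrow> sqrt 0"
    using r_pos by (intro tendsto_real_sqrt) simp
  then show ?thesis
    by simp
qed

lemma damp_power_A_tendsto_zero: "(\<lambda>n. (damp ^^ n) (A y)) \<longlonglongrightarrow> 0"
proof -
  define h where "h n = norm y * norm (B ((damp ^^ (2 * n)) (A y)))" for n
  have "(\<lambda>n. norm (B ((damp ^^ (2 * n)) (A y)))) \<longlonglongrightarrow> 0"
    using LIMSEQ_subseq_LIMSEQ[OF B_damp_power_tendsto_zero, of "\<lambda>n. 2 * n"]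
    by (simp add: strict_mono_def comp_def)
  then have "h \<longlonglongrightarrow> 0"
    unfolding h_def by (rule tendsto_mult_right_zero)
  then have sqrt_h: "(\<lambda>n. sqrt (h n)) \<longlonglongrightarrow> 0"
    using tendsto_real_sqrt[of h 0] by simp
  have bound: "norm ((damp ^^ n) (A y)) \<le> sqrt (h n)" for n
  proof -
    have "(norm ((damp ^^ n) (A y)))\<^sup>2 = Re (cinner y (B ((damp ^^ (2 * n)) (A y))))"
      by (simp add: Re_cinner_self [symmetric] cinner_damp_powers cinner_A mult_2)
    also have "\<dots> \<le> h n"
      unfolding h_def by (rule order_trans[OF complex_Re_le_cmod cauchy_schwarz_cinner])
    finally show ?thesis
      by (simp add: real_le_rsqrt)
  qed
  have "(\<lambda>n. norm ((damp ^^ n) (A y))) \<longlonglongrightarrow> 0"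
    by (rule tendsto_sandwich[OF _ _ tendsto_const sqrt_h]) (simp_all add: bound)
  then show ?thesis
    by (rule tendsto_norm_zero_cancel)
qed

lemma damp_even_power_Cauchy: "Cauchy (\<lambda>n. (damp ^^ (2 * n)) x)"
proof (rule CauchyI)
  fix e :: real
  assume "e > 0"
  define a where "a n = (norm ((damp ^^ n) x))\<^sup>2" for n
  have "decseq a"
    unfolding a_def decseq_Suc_iff by (simp add: norm_damp_le power_mono)
  then obtain l where "a \<longlonglongrightarrow> l"
    using decseq_convergent[of a 0] unfolding a_def by auto
  then obtain M where M: "\<forall>k\<ge>M. \<bar>a k - l\<bar> < e\<^sup>2 / 4"
    using \<open>e > 0\<close> unfolding lim_sequentially dist_real_def by (meson zero_less_divide_iff zero_less_numeral zero_less_power)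
  have norm_diff_square_powers: "(norm ((damp ^^ (2 * m)) x - (damp ^^ (2 * n)) x))\<^sup>2
      = a (2 * m) - 2 * a (m + n) + a (2 * n)" for m n
  proof -
    have "cinner ((damp ^^ (2 * m)) x) ((damp ^^ (2 * n)) x)
        = cinner ((damp ^^ (m + n)) x) ((damp ^^ (m + n)) x)"
      unfolding cinner_damp_powers
      by (rule arg_cong[where f="\<lambda>k. cinner x ((damp ^^ k) x)"]) simp
    then show ?thesis
      unfolding a_def by (simp add: norm_diff_square Re_cinner_self)
  qed
  have "norm ((damp ^^ (2 * m)) x - (damp ^^ (2 * n)) x) < e" if "m \<ge> M" "n \<ge> M" for m n
  proof -
    have "\<bar>a (2 * m) - l\<bar> < e\<^sup>2 / 4" "\<bar>a (2 * n) - l\<bar> < e\<^sup>2 / 4" "\<bar>a (m + n) - l\<bar> < e\<^sup>2 / 4"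
      using M that by auto
    then have "(norm ((damp ^^ (2 * m)) x - (damp ^^ (2 * n)) x))\<^sup>2 < e\<^sup>2"
      unfolding norm_diff_square_powers by linarith
    then show ?thesis
      using \<open>e > 0\<close> by (simp add: power_less_imp_less_base less_imp_le)
  qed
  then show "\<exists>M. \<forall>m\<ge>M. \<forall>n\<ge>M. norm ((damp ^^ (2 * m)) x - (damp ^^ (2 * n)) x) < e"
    by blast
qed

definition damp_limit :: "'a \<Rightarrow> 'a" where
  "damp_limit x = lim (\<lambda>n. (damp ^^ (2 * n)) x)"

lemma damp_even_power_tendsto: "(\<lambda>n. (damp ^^ (2 * n)) x) \<longlonglongrightarrow> damp_limit x"
  using damp_even_power_Cauchy Cauchy_convergent_iff convergent_LIMSEQ_iff
  unfolding damp_limit_def by blast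

lemma damp_limit_A: "damp_limit (A y) = 0"
proof -
  have "((\<lambda>n. (damp ^^ n) (A y)) \<circ> (\<lambda>n. 2 * n)) \<longlonglongrightarrow> 0"
    by (rule LIMSEQ_subseq_LIMSEQ[OF damp_power_A_tendsto_zero]) (simp add: strict_mono_def)
  then show ?thesis
    using damp_even_power_tendsto LIMSEQ_unique by (auto simp: comp_def)
qed

lemma damp_in_von_neumann_algebra:
  assumes "von_neumann_algebra R" and "A \<in> R" and "B \<in> R"
  shows "damp \<in> R"
proof -
  have "damp = (\<lambda>x. x - r *\<^sub>R (A \<circ> B) x)"
    by (simp add: fun_eq_iff damp_def)
  also have "\<dots> \<in> R"
    using assms by (intro von_neumann_algebra_diff von_neumann_algebra_id von_neumann_algebra_scaleR
        von_neumann_algebra_comp)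
  finally show ?thesis .
qed

lemma id_minus_damp_power: "x - (damp ^^ m) x = r *\<^sub>R A (B (\<Sum>j<m. (damp ^^ j) x))"
proof (induction m)
  case 0
  then show ?case
    using linear_simps(3)[OF A_linear] linear_simps(3)[OF B_linear] by simp
next
  case (Suc m)
  have "x - (damp ^^ Suc m) x = (x - (damp ^^ m) x) + r *\<^sub>R A (B ((damp ^^ m) x))"
    by (simp add: damp_def)
  then show ?case
    using Suc.IH by (simp add: linear_simps(1)[OF A_linear] linear_simps(1)[OF B_linear] scaleR_add_right)
qed

end

lemma left_factor_in_intersection:
  fixes A T :: "'a::chilbert_space \<Rightarrow> 'a"
  assumes R1: "von_neumann_algebra R1" and R2: "von_neumann_algebra R2"
    and "A \<in> R1" and "A \<in> R2" and "T \<in> R1" and "T \<circ> A \<in> R2"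
  shows "\<exists>S\<in>R1 \<inter> R2. S \<circ> A = T \<circ> A"
proof -
  obtain B where "is_adjoint A B"
    using R1 \<open>A \<in> R1\<close> unfolding von_neumann_algebra_def by blast
  then have "B \<in> R1" "B \<in> R2"
    using von_neumann_algebra_adjoint assms by blast+
  have A_bounded: "bounded_clinear A"
    using von_neumann_algebra_bounded_clinear R1 \<open>A \<in> R1\<close> .
  obtain r where "r > 0" "\<And>x. r * (norm (A x))\<^sup>2 \<le> (norm x)\<^sup>2"
    using bounded_clinear_damping_factor[OF A_bounded] by blast
  then interpret damped_adjoint_pair A B r
    using A_bounded \<open>is_adjoint A B\<close> von_neumann_algebra_bounded_clinear[OF R1 \<open>B \<in> R1\<close>]
    by unfold_locales
  have T_linear: "bounded_linear T"
    using bounded_clinear_imp_bounded_linear von_neumann_algebra_bounded_clinear R1 \<open>T \<in> R1\<close> by blast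
  obtain K where K: "K > 0" "\<And>x. norm (T x) \<le> norm x * K"
    using bounded_linear.pos_bounded[OF T_linear] by blast
  define S where "S x = T (x - damp_limit x)" for x
  define Sn where "Sn n = T \<circ> (\<lambda>x. x - (damp ^^ (2 * n)) x)" for n
  have "Sn n \<in> R1" for n
    unfolding Sn_def using damp_in_von_neumann_algebra[OF R1 \<open>A \<in> R1\<close> \<open>B \<in> R1\<close>]
    by (intro von_neumann_algebra_comp[OF R1] von_neumann_algebra_diff[OF R1] \<open>T \<in> R1\<close>
        von_neumann_algebra_id[OF R1] von_neumann_algebra_funpow[OF R1])
  moreover have "Sn n \<in> R2" for n
  proof -
    have "Sn n = (\<lambda>x. r *\<^sub>R (((T \<circ> A) \<circ> B) \<circ> (\<lambda>x. \<Sum>j<2 * n. (damp ^^ j) x)) x)"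
      unfolding Sn_def by (simp add: fun_eq_iff id_minus_damp_power linear_simps[OF T_linear])
    also have "\<dots> \<in> R2"
      using damp_in_von_neumann_algebra[OF R2 \<open>A \<in> R2\<close> \<open>B \<in> R2\<close>]
      by (intro von_neumann_algebra_scaleR[OF R2] von_neumann_algebra_comp[OF R2] \<open>T \<circ> A \<in> R2\<close>
          \<open>B \<in> R2\<close> von_neumann_algebra_sum[OF R2] von_neumann_algebra_funpow[OF R2])
    finally show ?thesis .
  qed
  moreover have "norm (Sn n x) \<le> norm x * (2 * K)" for n x
  proof -
    have "norm (x - (damp ^^ (2 * n)) x) \<le> 2 * norm x"
      using norm_triangle_ineq4[of x "(damp ^^ (2 * n)) x"] norm_damp_power_le[of "2 * n" x] by linarith
    from mult_right_mono[OF this less_imp_le[OF K(1)]] show ?thesis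
      unfolding Sn_def comp_def using order_trans[OF K(2)] by (simp add: ac_simps)
  qed
  moreover have "(\<lambda>n. Sn n x) \<longlonglongrightarrow> S x" for x
    unfolding Sn_def S_def comp_def
    by (intro bounded_linear.tendsto[OF T_linear] tendsto_diff tendsto_const damp_even_power_tendsto)
  ultimately have "S \<in> R1 \<inter> R2"
    using von_neumann_algebra_pointwise_limit R1 R2 by blast
  moreover have "S \<circ> A = T \<circ> A"
    by (simp add: fun_eq_iff S_def damp_limit_A)
  ultimately show ?thesis
    by blast
qed

theorem proposition3p9:
  fixes R1 R2 :: "('a::chilbert_space \<Rightarrow> 'a) set" and A :: "'a \<Rightarrow> 'a"
  assumes "von_neumann_algebra R1" and "von_neumann_algebra R2"
    and "A \<in> R1 \<inter> R2"
  shows "op_rmult R1 A \<inter> R2 = op_rmult R1 A \<inter> op_rmult R2 A \<and>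
         op_rmult R1 A \<inter> op_rmult R2 A = op_rmult (R1 \<inter> R2) A"
proof -
  have "op_rmult (R1 \<inter> R2) A \<subseteq> op_rmult R1 A \<inter> op_rmult R2 A"
    unfolding op_rmult_def by blast
  moreover have "op_rmult R2 A \<subseteq> R2"
    using assms von_neumann_algebra_comp unfolding op_rmult_def by blast
  moreover have "op_rmult R1 A \<inter> R2 \<subseteq> op_rmult (R1 \<inter> R2) A"
  proof
    fix X
    assume "X \<in> op_rmult R1 A \<inter> R2"
    then obtain T where "T \<in> R1" and "T \<circ> A \<in> R2" and "X = T \<circ> A"
      unfolding op_rmult_def by blast
    then obtain S where "S \<in> R1 \<inter> R2" and "X = S \<circ> A"
      using left_factor_in_intersection[OF assms(1,2)] assms(3) by (metis IntD1 IntD2)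
    then show "X \<in> op_rmult (R1 \<inter> R2) A"
      unfolding op_rmult_def by blast
  qed
  ultimately show ?thesis
    by blast
qed

end
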